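(* Let $d\ge 2$ and let $\triangle=\mathrm{conv}(v_0,\dots,v_d)\subset B_2^d$ be a simplex that maximizes the mean width $w(\cdot)$ over all simplices contained in $B_2^d$. Then: (a) $B_2^d$ is the smallest ball containing $\triangle$; (b) $v_i\in\mathbb{S}^{d-1}$ for all $0\le i\le d$, i.e. $\mathbb{S}^{d-1}$ is the circumsphere of $\triangle$; (c) the closed hemispheres $\{u\in\mathbb{S}^{d-1}: u\cdot v_i\ge 0\}$, $0\le i\le d$, cover $\mathbb{S}^{d-1}$.
   Context: $B_2^d\subset\mathbb{R}^d$ is the closed Euclidean unit ball and $\mathbb{S}^{d-1}=\partial B_2^d$; $\mu$ is the uniform probability measure on $\mathbb{S}^{d-1}$. For a convex body $K\subset B_2^d$, its support function is $h_K(u)=\max_{x\in K}u\cdot x$ and its mean width is $w(K)=2\int_{\mathbb{S}^{d-1}}h_K(u)\,d\mu(u)$. *)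

theory Defs
  imports "HOL-Analysis.Analysis"
begin

text \<open>Uniform probability measure on the unit sphere, realised (as a measure on the
  Borel sets of the whole space, concentrated on the sphere) as the image of the
  normalised Lebesgue measure on the unit ball under radial projection x \<mapsto> x / |x|.\<close>
definition sphere_measure :: "'a::euclidean_space measure" where
  "sphere_measure = distr (uniform_measure lborel (cball 0 1)) borel (\<lambda>x. x /\<^sub>R norm x)"

definition support_fun :: "'a::euclidean_space set \<Rightarrow> 'a \<Rightarrow> real" where
  "support_fun K u = (SUP x\<in>K. u \<bullet> x)"

definition mean_width :: "'a::euclidean_space set \<Rightarrow> real" where
  "mean_width K = 2 * (\<integral>u. support_fun K u \<partial>sphere_measure)"

end

theory Submission
  imports Defs "HOL-Probability.Probability_Measure"
begin

(* If a vertex w of a simplex in the unit ball lies strictly inside the ball, move it slightly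
   away from another vertex r, to w + s (w - r).  The new simplex still lies in the ball and
   contains the old one, and its support function is strictly larger on the open cone of
   directions u for which w is the unique maximiser of u \<bullet> v over the vertices.  That cone has
   positive measure, so the mean width strictly increases; hence a maximiser has all its
   vertices on the sphere (b).  Mean width is invariant under translation, because the linear
   term u \<bullet> a integrates to 0 against the symmetric measure on the sphere, so if the simplex fit
   into a ball of radius r < 1 a translate of it would be a maximiser with a vertex inside the
   ball; this gives (a).  Finally, if all vertices lay in an open hemisphere {v. u \<bullet> v < 0},
   moving the centre to -\<delta> u would put them into a ball of radius sqrt (1 - \<delta>^2) < 1,
   contradicting (a); this gives (c). *)

lemma prob_space_uniform_measure_cball:
  fixes c :: "'a::euclidean_space"
  assumes "r > 0"
  shows "prob_space (uniform_measure lborel (cball c r))"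
proof (rule prob_space_uniform_measure)
  show "emeasure lborel (cball c r) \<noteq> 0"
    using assms unit_ball_vol_pos[of "real DIM('a)"]
    by (simp add: emeasure_cball del: unit_ball_vol_pos)
  show "emeasure lborel (cball c r) \<noteq> \<infinity>"
    using emeasure_lborel_cball_finite[of c r] by auto
qed

lemma measurable_normalize [measurable]:
  "(\<lambda>x::'a::euclidean_space. x /\<^sub>R norm x) \<in> borel_measurable borel"
  by measurable

lemma prob_space_sphere_measure: "prob_space sphere_measure"
  unfolding sphere_measure_def
  by (intro prob_space.prob_space_distr prob_space_uniform_measure_cball) simp_all

lemma distr_lborel_uminus: "distr lborel borel uminus = (lborel :: 'a::euclidean_space measure)"
  using lborel_affine[of "-1" "0::'a"] by (simp add: density_1)

lemma distr_uniform_measure_cball_uminus: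
  "distr (uniform_measure lborel (cball 0 r)) borel uminus
     = uniform_measure lborel (cball (0::'a::euclidean_space) r)"
proof (rule measure_eqI)
  fix A :: "'a set" assume "A \<in> sets (distr (uniform_measure lborel (cball 0 r)) borel uminus)"
  then have A: "A \<in> sets borel" by simp
  have A': "uminus -` A \<in> sets borel"
    using measurable_sets[OF _ A, of uminus borel] by simp
  have "emeasure lborel (cball 0 r \<inter> uminus -` A) = emeasure lborel (uminus -` (cball 0 r \<inter> A))"
    by (intro arg_cong[where f="emeasure lborel"]) auto
  also have "\<dots> = emeasure (distr lborel borel uminus) (cball 0 r \<inter> A)"
    using A by (simp add: emeasure_distr)
  also have "\<dots> = emeasure lborel (cball 0 r \<inter> A)"
    by (simp add: distr_lborel_uminus)
  finally show "emeasure (distr (uniform_measure lborel (cball 0 r)) borel uminus) A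
      = emeasure (uniform_measure lborel (cball 0 r)) A"
    using A A' by (simp add: emeasure_distr Int_commute del: vimage_Int)
qed simp

lemma distr_sphere_measure_uminus:
  "distr sphere_measure borel uminus = (sphere_measure :: 'a::euclidean_space measure)"
proof -
  let ?B = "uniform_measure lborel (cball (0::'a) 1)"
  have "distr sphere_measure borel uminus = distr ?B borel (\<lambda>x. - (x /\<^sub>R norm x))"
    unfolding sphere_measure_def by (subst distr_distr) (simp_all add: comp_def)
  also have "\<dots> = distr (distr ?B borel uminus) borel (\<lambda>x. x /\<^sub>R norm x)"
    by (subst distr_distr) (simp_all add: comp_def)
  finally show ?thesis
    unfolding distr_uniform_measure_cball_uminus sphere_measure_def .
qed

lemma integrable_sphere_measure:
  fixes g :: "'a::euclidean_space \<Rightarrow> real"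
  assumes [measurable]: "g \<in> borel_measurable borel"
    and bound: "\<And>u. norm u \<le> 1 \<Longrightarrow> \<bar>g u\<bar> \<le> B"
  shows "integrable sphere_measure g"
proof -
  interpret prob_space "uniform_measure lborel (cball (0::'a) 1)"
    by (rule prob_space_uniform_measure_cball) simp
  have "norm (x /\<^sub>R norm x) \<le> 1" for x :: 'a
    by (cases "x = 0") simp_all
  then show ?thesis
    unfolding sphere_measure_def using bound
    by (subst integrable_distr_eq) (auto intro!: integrable_const_bound[where B=B])
qed

lemma integrable_sphere_measure_inner:
  "integrable sphere_measure (\<lambda>u::'a::euclidean_space. u \<bullet> t)"
proof (rule integrable_sphere_measure)
  fix u :: 'a assume "norm u \<le> 1"
  then show "\<bar>u \<bullet> t\<bar> \<le> norm t"
    using Cauchy_Schwarz_ineq2[of u t] mult_left_le_one_le[of "norm t" "norm u"] by simp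
qed simp

lemma integral_sphere_measure_inner:
  "(\<integral>u. u \<bullet> t \<partial>(sphere_measure :: 'a::euclidean_space measure)) = 0"
proof -
  have "(\<integral>u. u \<bullet> t \<partial>(sphere_measure :: 'a measure))
      = (\<integral>u. u \<bullet> t \<partial>distr sphere_measure borel uminus)"
    by (simp add: distr_sphere_measure_uminus)
  also have "\<dots> = - (\<integral>u. u \<bullet> t \<partial>sphere_measure)"
    by (subst integral_distr) (simp_all add: sphere_measure_def)
  finally show ?thesis by simp
qed

lemma emeasure_sphere_measure_cone_pos:
  fixes U :: "'a::euclidean_space set"
  assumes "open U" "U \<noteq> {}"
    and cone: "\<And>x c. x \<in> U \<Longrightarrow> c > 0 \<Longrightarrow> c *\<^sub>R x \<in> U"
  shows "emeasure sphere_measure U > 0"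
proof -
  let ?n = "\<lambda>x::'a. x /\<^sub>R norm x"
  have [measurable]: "U \<in> sets borel" using \<open>open U\<close> by simp
  have nU: "?n -` U \<in> sets borel"
    using measurable_sets[OF measurable_normalize, of U] by simp
  obtain p where "p \<in> U" using \<open>U \<noteq> {}\<close> by blast
  then have "p /\<^sub>R (2 * norm p) \<in> U \<inter> ball 0 1"
    using cone[of p "inverse (2 * norm p)"] by (cases "p = 0") (auto simp: divide_simps)
  moreover have "open (U \<inter> ball 0 1)" using \<open>open U\<close> by auto
  ultimately obtain q e where "e > 0" "ball q e \<subseteq> U \<inter> ball 0 1"
    by (meson openE)
  moreover have "?n x \<in> U" if "x \<in> U" for x
    using that cone[of x "inverse (norm x)"] by (cases "x = 0") (simp_all add: divide_inverse_commute)
  then have "U \<inter> ball 0 1 \<subseteq> cball 0 1 \<inter> ?n -` U"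
    by auto
  ultimately have "emeasure lborel (ball q e) \<le> emeasure lborel (cball 0 1 \<inter> ?n -` U)"
    using nU by (intro emeasure_mono) auto
  moreover have "emeasure lborel (ball q e) > 0"
    using \<open>e > 0\<close> by (simp add: emeasure_ball)
  ultimately have "emeasure lborel (cball 0 1 \<inter> ?n -` U) > 0"
    by order
  then show ?thesis
    unfolding sphere_measure_def
    using emeasure_lborel_cball_finite[of "0::'a" 1]
    by (simp add: emeasure_distr nU ennreal_zero_less_divide)
qed

lemma integral_sphere_measure_strict_mono:
  fixes f g :: "'a::euclidean_space \<Rightarrow> real"
  assumes "integrable sphere_measure f" "integrable sphere_measure g"
    and "\<And>u. f u \<le> g u"
    and "open U" "U \<noteq> {}" "\<And>x c. x \<in> U \<Longrightarrow> c > 0 \<Longrightarrow> c *\<^sub>R x \<in> U"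
    and "\<And>u. u \<in> U \<Longrightarrow> f u < g u"
  shows "(\<integral>u. f u \<partial>sphere_measure) < (\<integral>u. g u \<partial>sphere_measure)"
proof -
  interpret prob_space "sphere_measure :: 'a measure"
    by (rule prob_space_sphere_measure)
  show ?thesis
  proof (rule integral_less_AE[OF assms(1,2)])
    show "emeasure sphere_measure U \<noteq> 0"
      using emeasure_sphere_measure_cone_pos[OF assms(4-6)] by simp
    show "U \<in> sets sphere_measure"
      using \<open>open U\<close> by (simp add: sphere_measure_def)
  qed (use assms(3,7) in \<open>auto simp: less_imp_neq\<close>)
qed

lemma inner_le_support_fun:
  fixes K :: "'a::euclidean_space set"
  assumes "bounded K" "x \<in> K"
  shows "u \<bullet> x \<le> support_fun K u"
  unfolding support_fun_def
  using assms bounded_inner_imp_bdd_above[of K u] by (intro cSUP_upper) (simp_all add: inner_commute)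

lemma support_fun_le:
  fixes K :: "'a::euclidean_space set"
  assumes "K \<noteq> {}" "\<And>x. x \<in> K \<Longrightarrow> u \<bullet> x \<le> b"
  shows "support_fun K u \<le> b"
  unfolding support_fun_def using assms by (rule cSUP_least)

lemma support_fun_mono:
  fixes K L :: "'a::euclidean_space set"
  assumes "K \<noteq> {}" "bounded L" "K \<subseteq> L"
  shows "support_fun K u \<le> support_fun L u"
  using assms by (intro support_fun_le inner_le_support_fun) auto

lemma abs_support_fun_le:
  fixes K :: "'a::euclidean_space set"
  assumes "K \<noteq> {}" "K \<subseteq> cball 0 B"
  shows "\<bar>support_fun K u\<bar> \<le> B * norm u"
proof -
  have inner_bound: "\<bar>u \<bullet> x\<bar> \<le> B * norm u" if "x \<in> K" for x
  proof -
    have "norm x \<le> B" using that assms(2) by auto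
    then show ?thesis
      by (metis Cauchy_Schwarz_ineq2 mult.commute mult_left_mono norm_ge_zero order_trans)
  qed
  obtain x where x: "x \<in> K" using assms(1) by blast
  have "- (B * norm u) \<le> u \<bullet> x"
    using inner_bound[OF x] by (simp add: abs_le_iff)
  also have "\<dots> \<le> support_fun K u"
    using x bounded_subset[OF bounded_cball assms(2)] by (intro inner_le_support_fun)
  finally have "- (B * norm u) \<le> support_fun K u" .
  moreover have "support_fun K u \<le> B * norm u"
    using inner_bound assms(1) by (intro support_fun_le) (auto simp: abs_le_iff)
  ultimately show ?thesis by linarith
qed

lemma support_fun_convex_hull:
  fixes V :: "'a::euclidean_space set"
  assumes "finite V" "V \<noteq> {}"
  shows "support_fun (convex hull V) u = Max ((\<lambda>v. u \<bullet> v) ` V)"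
proof (rule antisym)
  have "V \<subseteq> {x. u \<bullet> x \<le> Max ((\<lambda>v. u \<bullet> v) ` V)}"
    using assms by auto
  then have "convex hull V \<subseteq> {x. u \<bullet> x \<le> Max ((\<lambda>v. u \<bullet> v) ` V)}"
    by (intro hull_minimal convex_halfspace_le)
  then show "support_fun (convex hull V) u \<le> Max ((\<lambda>v. u \<bullet> v) ` V)"
    using assms by (intro support_fun_le) auto
  have "Max ((\<lambda>v. u \<bullet> v) ` V) \<in> (\<lambda>v. u \<bullet> v) ` V"
    using assms by (intro Max_in) auto
  then obtain v where "v \<in> V" "Max ((\<lambda>v. u \<bullet> v) ` V) = u \<bullet> v"
    by auto
  then show "Max ((\<lambda>v. u \<bullet> v) ` V) \<le> support_fun (convex hull V) u"
    using assms by (metis inner_le_support_fun finite_imp_bounded_convex_hull hull_inc)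
qed

lemma integrable_support_fun_convex_hull:
  fixes V :: "'a::euclidean_space set"
  assumes "finite V" "V \<noteq> {}"
  shows "integrable sphere_measure (support_fun (convex hull V))"
proof -
  obtain B where "B > 0" "\<And>x. x \<in> convex hull V \<Longrightarrow> norm x \<le> B"
    using finite_imp_bounded_convex_hull[OF assms(1)] by (auto simp: bounded_pos)
  then have "\<bar>support_fun (convex hull V) u\<bar> \<le> B * norm u" for u
    using assms by (intro abs_support_fun_le) auto
  moreover have "B * norm u \<le> B" if "norm u \<le> 1" for u
    using that \<open>B > 0\<close> by (simp add: mult_left_le_one_le)
  ultimately have "\<bar>support_fun (convex hull V) u\<bar> \<le> B" if "norm u \<le> 1" for u
    using that order_trans by blast
  moreover have "support_fun (convex hull V) \<in> borel_measurable borel"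
    unfolding support_fun_convex_hull[OF assms, abs_def] using assms(1) by measurable
  ultimately show ?thesis
    by (intro integrable_sphere_measure)
qed

lemma mean_width_convex_hull_translation:
  fixes V :: "'a::euclidean_space set"
  assumes "finite V" "V \<noteq> {}"
  shows "mean_width (convex hull ((+) a ` V)) = mean_width (convex hull V)"
proof -
  have "support_fun (convex hull ((+) a ` V)) u = support_fun (convex hull V) u + u \<bullet> a" for u
    using assms Max_add_commute[OF assms, of "\<lambda>v. u \<bullet> v" "u \<bullet> a"]
    by (simp add: support_fun_convex_hull image_image inner_add_right add.commute)
  then have "mean_width (convex hull ((+) a ` V))
      = 2 * (\<integral>u. support_fun (convex hull V) u + u \<bullet> a \<partial>sphere_measure)"
    unfolding mean_width_def by presburger
  also have "\<dots> = mean_width (convex hull V)"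
    using assms unfolding mean_width_def
    by (simp add: integrable_support_fun_convex_hull integrable_sphere_measure_inner
        integral_sphere_measure_inner)
  finally show ?thesis .
qed

lemma mean_width_convex_hull_strict_mono:
  fixes V W :: "'a::euclidean_space set"
  assumes "finite V" "V \<noteq> {}" "finite W" "convex hull V \<subseteq> convex hull W"
    and "open U" "U \<noteq> {}" "\<And>x c. x \<in> U \<Longrightarrow> c > 0 \<Longrightarrow> c *\<^sub>R x \<in> U"
    and "\<And>u. u \<in> U \<Longrightarrow> support_fun (convex hull V) u < support_fun (convex hull W) u"
  shows "mean_width (convex hull V) < mean_width (convex hull W)"
proof -
  have "W \<noteq> {}" using assms(2,4) by auto
  have "support_fun (convex hull V) u \<le> support_fun (convex hull W) u" for u
    using assms(1-4) finite_imp_bounded_convex_hull by (intro support_fun_mono) auto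
  then show ?thesis
    unfolding mean_width_def
    using assms \<open>W \<noteq> {}\<close>
    by (simp add: integral_sphere_measure_strict_mono integrable_support_fun_convex_hull)
qed

lemma exists_direction_maximized_at_point:
  fixes R :: "'a::euclidean_space set"
  assumes "finite R" "w \<notin> convex hull R"
  obtains u where "\<And>v. v \<in> R \<Longrightarrow> u \<bullet> v < u \<bullet> w"
proof -
  have "closed (convex hull R)"
    using assms(1) by (simp add: compact_imp_closed finite_imp_compact_convex_hull)
  then obtain a b where "a \<bullet> w < b" "\<And>x. x \<in> convex hull R \<Longrightarrow> b < a \<bullet> x"
    using separating_hyperplane_closed_point[OF convex_convex_hull _ assms(2)] by blast
  then have "\<And>v. v \<in> R \<Longrightarrow> (- a) \<bullet> v < (- a) \<bullet> w"
    by (smt (verit) hull_inc inner_minus_left)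
  then show thesis by (rule that)
qed

lemma exists_step_within_unit_ball:
  fixes w d :: "'a::real_normed_vector"
  assumes "norm w < 1"
  obtains s where "s > 0" "norm (w + s *\<^sub>R d) \<le> 1"
proof
  let ?s = "(1 - norm w) / (norm d + 1)"
  show "?s > 0" using assms by (simp add: add_nonneg_pos)
  have "?s * norm d \<le> ?s * (norm d + 1)"
    using \<open>?s > 0\<close> by (intro mult_left_mono) auto
  also have "\<dots> = 1 - norm w"
    using norm_ge_zero[of d] by (smt (verit) nonzero_divide_eq_eq)
  finally have "?s * norm d \<le> 1 - norm w" .
  moreover have "norm (w + ?s *\<^sub>R d) \<le> norm w + ?s * norm d"
    using norm_triangle_ineq[of w "?s *\<^sub>R d"] \<open>?s > 0\<close> assms by simp
  ultimately show "norm (w + ?s *\<^sub>R d) \<le> 1"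
    by linarith
qed

lemma in_closed_segment_extension:
  fixes w r :: "'a::real_vector"
  assumes "s \<ge> 0"
  shows "w \<in> closed_segment (w + s *\<^sub>R (w - r)) r"
proof -
  define t where "t = s / (1 + s)"
  have "0 \<le> t" "t \<le> 1" and ts: "(1 - t) * s = t"
    using assms by (simp_all add: t_def field_simps)
  have "(1 - t) *\<^sub>R (w + s *\<^sub>R (w - r)) + t *\<^sub>R r
      = ((1 - t) + (1 - t) * s) *\<^sub>R w + (t - (1 - t) * s) *\<^sub>R r"
    by (simp add: algebra_simps)
  also have "\<dots> = w"
    unfolding ts by simp
  finally show ?thesis
    unfolding in_segment using \<open>0 \<le> t\<close> \<open>t \<le> 1\<close> by metis
qed

lemma convex_hull_insert_subset_extension:
  fixes w r :: "'a::real_vector"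
  assumes "r \<in> R" "s \<ge> 0"
  shows "convex hull (insert w R) \<subseteq> convex hull (insert (w + s *\<^sub>R (w - r)) R)"
proof (rule hull_minimal)
  have "w \<in> convex hull {w + s *\<^sub>R (w - r), r}"
    using in_closed_segment_extension[OF assms(2)] by (simp add: segment_convex_hull)
  also have "\<dots> \<subseteq> convex hull (insert (w + s *\<^sub>R (w - r)) R)"
    using assms(1) by (intro hull_mono) auto
  finally show "insert w R \<subseteq> convex hull (insert (w + s *\<^sub>R (w - r)) R)"
    by (auto intro: hull_inc)
qed simp

lemma affine_independent_of_subset_affine_hull:
  fixes W W' :: "'a::euclidean_space set"
  assumes "\<not> affine_dependent W" "finite W'" "W \<subseteq> affine hull W'" "card W' \<le> card W"
  shows "\<not> affine_dependent W'" "card W' = card W"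
proof -
  have "aff_dim W = int (card W) - 1"
    using assms(1) affine_independent_iff_card by blast
  moreover have "aff_dim W \<le> aff_dim W'"
    using aff_dim_subset[OF assms(3)] by simp
  moreover have "aff_dim W' \<le> int (card W') - 1"
    using aff_dim_le_card[OF assms(2)] by simp
  ultimately have "card W' = card W" "aff_dim W' = int (card W') - 1"
    using assms(4) by linarith+
  then show "\<not> affine_dependent W'" "card W' = card W"
    using assms(2) affine_independent_iff_card by blast+
qed

lemma mean_width_convex_hull_move_vertex:
  fixes R :: "'a::euclidean_space set"
  assumes "finite R" "r \<in> R" "w \<notin> convex hull R" "s > 0"
  shows "mean_width (convex hull (insert w R))
           < mean_width (convex hull (insert (w + s *\<^sub>R (w - r)) R))"
proof -
  define w' where "w' = w + s *\<^sub>R (w - r)"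
  define U where "U = (\<Inter>v\<in>R. {u. u \<bullet> v < u \<bullet> w})"
  have "open U"
    unfolding U_def using assms(1) by (intro open_INT ballI open_Collect_less continuous_intros)
  moreover obtain u0 where "\<And>v. v \<in> R \<Longrightarrow> u0 \<bullet> v < u0 \<bullet> w"
    using exists_direction_maximized_at_point[OF assms(1,3)] by blast
  then have "U \<noteq> {}" by (auto simp: U_def)
  moreover have "c *\<^sub>R u \<in> U" if "u \<in> U" "c > 0" for u c
    using that by (auto simp: U_def)
  moreover have "support_fun (convex hull (insert w R)) u < support_fun (convex hull (insert w' R)) u"
    if "u \<in> U" for u
  proof -
    have "support_fun (convex hull (insert w R)) u = Max ((\<lambda>v. u \<bullet> v) ` insert w R)"
      using assms(1) by (simp add: support_fun_convex_hull)
    also have "\<dots> = u \<bullet> w"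
      using that assms(1) by (intro Max_eqI) (auto simp: U_def less_imp_le)
    also have "\<dots> < u \<bullet> w'"
      using that assms(2,4) by (auto simp: U_def w'_def inner_add_right inner_diff_right)
    also have "\<dots> \<le> support_fun (convex hull (insert w' R)) u"
      using assms(1) by (intro inner_le_support_fun finite_imp_bounded_convex_hull) (auto intro: hull_inc)
    finally show ?thesis .
  qed
  moreover have "convex hull (insert w R) \<subseteq> convex hull (insert w' R)"
    unfolding w'_def using assms(2,4) by (intro convex_hull_insert_subset_extension) auto
  ultimately show ?thesis
    unfolding w'_def[symmetric] using assms(1)
    by (intro mean_width_convex_hull_strict_mono[where U=U]) auto
qed

lemma simplex_push_vertex:
  fixes W :: "'a::euclidean_space set"
  assumes "\<not> affine_dependent W" "convex hull W \<subseteq> cball 0 1"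
    and "w \<in> W" "norm w < 1" "W \<noteq> {w}"
  obtains W' :: "'a set"
  where "\<not> affine_dependent W'" "card W' = card W" "convex hull W' \<subseteq> cball 0 1"
    and "mean_width (convex hull W) < mean_width (convex hull W')"
proof -
  define R where "R = W - {w}"
  have "finite W" using assms(1) by (rule aff_independent_finite)
  then have "finite R" "W = insert w R" "w \<notin> R"
    using assms(3) by (auto simp: R_def)
  obtain r where "r \<in> R" using assms(3,5) by (auto simp: R_def)
  have "w \<notin> convex hull R"
    using assms(1,3) convex_hull_subset_affine_hull by (fastforce simp: R_def affine_dependent_def)
  obtain s where "s > 0" and w'_norm: "norm (w + s *\<^sub>R (w - r)) \<le> 1"
    using exists_step_within_unit_ball[OF assms(4)] by blast
  define W' where "W' = insert (w + s *\<^sub>R (w - r)) R"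
  have larger: "mean_width (convex hull W) < mean_width (convex hull W')"
    unfolding W'_def \<open>W = insert w R\<close>
    by (rule mean_width_convex_hull_move_vertex) fact+
  have "convex hull W \<subseteq> convex hull W'"
    unfolding W'_def \<open>W = insert w R\<close>
    using \<open>r \<in> R\<close> \<open>s > 0\<close> by (intro convex_hull_insert_subset_extension) auto
  then have "W \<subseteq> affine hull W'"
    using hull_subset[of W convex] convex_hull_subset_affine_hull by blast
  moreover have "finite W'" "card W' \<le> card W"
    using \<open>finite R\<close> \<open>W = insert w R\<close> \<open>w \<notin> R\<close> by (simp_all add: W'_def card_insert_le_m1)
  ultimately have "\<not> affine_dependent W'" "card W' = card W"
    using affine_independent_of_subset_affine_hull[OF assms(1)] by blast+
  moreover have "convex hull W' \<subseteq> cball 0 1"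
    using assms(2) w'_norm \<open>W = insert w R\<close> hull_subset[of W convex]
    by (intro hull_minimal) (auto simp: W'_def)
  ultimately show thesis
    using larger by (rule that)
qed

definition max_mean_width_simplex :: "'a::euclidean_space set \<Rightarrow> bool" where
  "max_mean_width_simplex V \<longleftrightarrow>
     \<not> affine_dependent V \<and> card V = DIM('a) + 1 \<and> convex hull V \<subseteq> cball 0 1 \<and>
     (\<forall>T :: 'a set. int DIM('a) simplex T \<longrightarrow> T \<subseteq> cball 0 1 \<longrightarrow> mean_width T \<le> mean_width (convex hull V))"

lemma max_mean_width_simplex_vertex_norm:
  fixes V :: "'a::euclidean_space set"
  assumes "max_mean_width_simplex V" "v \<in> V"
  shows "norm v = 1"
proof (rule ccontr)
  assume "norm v \<noteq> 1"
  have indep: "\<not> affine_dependent V" and card: "card V = DIM('a) + 1"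
    and inball: "convex hull V \<subseteq> cball 0 1"
    and maximal: "\<And>T :: 'a set. int DIM('a) simplex T \<Longrightarrow> T \<subseteq> cball 0 1 \<Longrightarrow>
                    mean_width T \<le> mean_width (convex hull V)"
    using assms(1) by (auto simp: max_mean_width_simplex_def)
  have "norm v < 1"
    using \<open>norm v \<noteq> 1\<close> assms(2) inball hull_subset by fastforce
  moreover have "V \<noteq> {v}"
    using card DIM_positive[where 'a='a] by auto
  ultimately obtain W :: "'a set" where "\<not> affine_dependent W" "card W = card V"
      "convex hull W \<subseteq> cball 0 1" "mean_width (convex hull V) < mean_width (convex hull W)"
    using simplex_push_vertex[OF indep inball assms(2)] by blast
  then show False
    using maximal[of "convex hull W"] simplex_convex_hull[of W "int DIM('a)"] card by simp
qed

lemma max_mean_width_simplex_translation: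
  fixes V :: "'a::euclidean_space set"
  assumes "max_mean_width_simplex V" "convex hull ((+) a ` V) \<subseteq> cball 0 1"
  shows "max_mean_width_simplex ((+) a ` V)"
proof -
  have indep: "\<not> affine_dependent V" and card: "card V = DIM('a) + 1"
    using assms(1) by (simp_all add: max_mean_width_simplex_def)
  then have "finite V" "V \<noteq> {}"
    by (auto intro: aff_independent_finite)
  then have "mean_width (convex hull ((+) a ` V)) = mean_width (convex hull V)"
    by (rule mean_width_convex_hull_translation)
  moreover have "\<not> affine_dependent ((+) a ` V)"
    using indep affine_dependent_translation_eq[of V a] by simp
  moreover have "card ((+) a ` V) = card V"
    by (simp add: card_image)
  ultimately show ?thesis
    using assms card by (simp add: max_mean_width_simplex_def)
qed

lemma max_mean_width_simplex_min_ball: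
  fixes V :: "'a::euclidean_space set"
  assumes "max_mean_width_simplex V" "convex hull V \<subseteq> cball x r"
  shows "1 \<le> r"
proof (rule ccontr)
  assume "\<not> 1 \<le> r"
  have "convex hull ((+) (- x) ` V) = (+) (- x) ` (convex hull V)"
    by (rule convex_hull_translation)
  also have "\<dots> \<subseteq> cball 0 r"
    using assms(2) by (auto simp: dist_norm)
  finally have small: "convex hull ((+) (- x) ` V) \<subseteq> cball 0 r" .
  then have "max_mean_width_simplex ((+) (- x) ` V)"
    using assms(1) \<open>\<not> 1 \<le> r\<close> by (intro max_mean_width_simplex_translation) auto
  moreover obtain v where "v \<in> V"
    using assms(1) by (force simp: max_mean_width_simplex_def)
  ultimately have "norm (- x + v) = 1"
    by (intro max_mean_width_simplex_vertex_norm) auto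
  moreover have "- x + v \<in> convex hull ((+) (- x) ` V)"
    using \<open>v \<in> V\<close> by (intro hull_inc) simp
  then have "norm (- x + v) \<le> r"
    using small by auto
  ultimately show False
    using \<open>\<not> 1 \<le> r\<close> by simp
qed

lemma open_hemisphere_subset_smaller_cball:
  fixes V :: "'a::euclidean_space set"
  assumes "finite V" "V \<noteq> {}" "V \<subseteq> cball 0 1" "norm u = 1" "\<And>v. v \<in> V \<Longrightarrow> u \<bullet> v < 0"
  obtains x r where "V \<subseteq> cball x r" "r < 1"
proof
  define \<delta> where "\<delta> = Min ((\<lambda>v. - (u \<bullet> v)) ` V)"
  have "\<delta> > 0"
    using assms(1,2,5) by (simp add: \<delta>_def)
  have \<delta>_le: "\<delta> \<le> - (u \<bullet> v)" if "v \<in> V" for v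
    using assms(1) that by (simp add: \<delta>_def)
  show "sqrt (1 - \<delta>\<^sup>2) < 1"
    using \<open>\<delta> > 0\<close> by simp
  show "V \<subseteq> cball (- (\<delta> *\<^sub>R u)) (sqrt (1 - \<delta>\<^sup>2))"
  proof
    fix v assume "v \<in> V"
    have "u \<bullet> u = 1"
      using assms(4) by (simp add: dot_square_norm)
    then have "(norm (v + \<delta> *\<^sub>R u))\<^sup>2 = (norm v)\<^sup>2 + 2 * \<delta> * (u \<bullet> v) + \<delta>\<^sup>2"
      unfolding power2_norm_eq_inner
      by (simp add: inner_add_left inner_add_right inner_commute algebra_simps power2_eq_square)
    also have "\<dots> \<le> 1 - \<delta>\<^sup>2"
    proof -
      have "norm v \<le> 1"
        using \<open>v \<in> V\<close> assms(3) by auto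
      then have "(norm v)\<^sup>2 \<le> 1"
        by (simp add: power_le_one)
      moreover have "\<delta> * \<delta> \<le> \<delta> * - (u \<bullet> v)"
        using \<open>\<delta> > 0\<close> \<delta>_le[OF \<open>v \<in> V\<close>] by (intro mult_left_mono) auto
      ultimately show ?thesis
        by (simp add: power2_eq_square algebra_simps)
    qed
    finally have "norm (v + \<delta> *\<^sub>R u) \<le> sqrt (1 - \<delta>\<^sup>2)"
      by (rule real_le_rsqrt)
    moreover have "dist (- (\<delta> *\<^sub>R u)) v = norm (v + \<delta> *\<^sub>R u)"
      by (metis dist_norm minus_add_distrib norm_minus_cancel diff_conv_add_uminus add.commute)
    ultimately show "v \<in> cball (- (\<delta> *\<^sub>R u)) (sqrt (1 - \<delta>\<^sup>2))"
      by simp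
  qed
qed

lemma max_mean_width_simplex_hemispheres_cover:
  fixes V :: "'a::euclidean_space set"
  assumes "max_mean_width_simplex V"
  shows "sphere 0 1 \<subseteq> (\<Union>v\<in>V. {u. u \<bullet> v \<ge> 0})"
proof
  fix u :: 'a assume "u \<in> sphere 0 1"
  show "u \<in> (\<Union>v\<in>V. {u. u \<bullet> v \<ge> 0})"
  proof (rule ccontr)
    assume "u \<notin> (\<Union>v\<in>V. {u. u \<bullet> v \<ge> 0})"
    then have "\<And>v. v \<in> V \<Longrightarrow> u \<bullet> v < 0" by force
    moreover have "finite V" "V \<noteq> {}" "V \<subseteq> cball 0 1"
      using assms hull_subset[of V convex]
      by (auto simp: max_mean_width_simplex_def intro: aff_independent_finite)
    moreover have "norm u = 1"
      using \<open>u \<in> sphere 0 1\<close> by simp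
    ultimately obtain x r where "V \<subseteq> cball x r" "r < 1"
      using open_hemisphere_subset_smaller_cball by metis
    then have "convex hull V \<subseteq> cball x r"
      by (intro hull_minimal) simp_all
    then show False
      using max_mean_width_simplex_min_ball[OF assms] \<open>r < 1\<close> by fastforce
  qed
qed

theorem claim1p2:
  fixes V :: "'a::euclidean_space set"
  assumes dim: "DIM('a) \<ge> 2"
    and simp: "\<not> affine_dependent V" "card V = DIM('a) + 1"
    and inball: "convex hull V \<subseteq> cball 0 1"
    and maximal: "\<And>T :: 'a set. int DIM('a) simplex T \<Longrightarrow> T \<subseteq> cball 0 1 \<Longrightarrow>
                   mean_width T \<le> mean_width (convex hull V)"
  shows "(\<forall>x r. convex hull V \<subseteq> cball x r \<longrightarrow> 1 \<le> r)
     \<and> (\<forall>v\<in>V. norm v = 1)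
     \<and> sphere 0 1 \<subseteq> (\<Union>v\<in>V. {u. u \<bullet> v \<ge> 0})"
proof -
  have max: "max_mean_width_simplex V"
    using simp inball maximal by (simp add: max_mean_width_simplex_def)
  show ?thesis
    using max_mean_width_simplex_min_ball[OF max] max_mean_width_simplex_vertex_norm[OF max]
      max_mean_width_simplex_hemispheres_cover[OF max]
    by blast
qed

end
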